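(* For any rooted binary tree $T$ with $n$ leaves, the height of the modified centroid decomposition satisfies $h(\mathit{MCD}(T))\le 2+2\log_2 n$.
   Context: A rooted binary tree is one in which every internal node has exactly two children, a left and a right child. A component of $T$ is a connected set of nodes of $T$, and $|C|$ denotes the number of nodes of a component $C$. An edge of $T$ crosses the boundary of $C$ if exactly one of its endpoints lies in $C$. It is an edge from below if its endpoint in $C$ is the parent endpoint. A centroid of a component $C$ is a node $u\in C$ such that every connected component of $C\setminus\{u\}$ has at most $|C|/2$ nodes. Removing a node $s$ from $C$ leaves at most three connected components: $C_l$ containing the left child of $s$, $C_r$ containing the right child of $s$, and $C_p$ containing the parent of $s$, each intersected with $C$ and possibly empty. The modified centroid decomposition $\mathit{MCD}(T)$ is a ternary tree built recursively, starting from the component $C=T$. For the current component $C$ a splitting node $s$ is chosen. If $C$ has no edge from below, $s$ is a centroid $c$ of $C$. Otherwise $C$ has exactly one edge $(x,y)$ from below with $x\in C$; let $c$ be a centroid of $C$, and let $s$ be the lowest common ancestor of $x$ and $c$. The node of $\mathit{MCD}(T)$ for $C$ stores $s$. Its children are the nodes of $\mathit{MCD}(T)$ for the nonempty components among $C_l,C_r,C_p$ obtained by removing $s$ from $C$. Every component arising this way has at most one edge from below and at most one edge from above. The height $h(\mathit{MCD}(T))$ is the height of this ternary tree. *)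

theory Defs
  imports Complex_Main
begin

text \<open>Rooted binary trees: every internal node has exactly two children.
  Nodes of a tree are identified with their positions: the list of
  directions (False = left, True = right) from the root.\<close>

datatype bt = Lf | Nd bt bt

fun nodes :: "bt \<Rightarrow> bool list set" where
  "nodes Lf = {[]}"
| "nodes (Nd l r) = insert [] (Cons False ` nodes l \<union> Cons True ` nodes r)"

fun leaves :: "bt \<Rightarrow> nat" where
  "leaves Lf = 1"
| "leaves (Nd l r) = leaves l + leaves r"

definition tadj :: "bool list \<Rightarrow> bool list \<Rightarrow> bool" where
  "tadj u v \<longleftrightarrow> (\<exists>b. v = u @ [b]) \<or> (\<exists>b. u = v @ [b])"

definition is_component :: "bt \<Rightarrow> bool list set \<Rightarrow> bool" where
  "is_component T C \<longleftrightarrow> C \<subseteq> nodes T \<and> C \<noteq> {} \<and>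
     (\<forall>u\<in>C. \<forall>v\<in>C. (u, v) \<in> {(a, b). a \<in> C \<and> b \<in> C \<and> tadj a b}\<^sup>*)"

definition edge_from_below :: "bt \<Rightarrow> bool list set \<Rightarrow> bool list \<Rightarrow> bool list \<Rightarrow> bool" where
  "edge_from_below T C x y \<longleftrightarrow> x \<in> C \<and> y \<notin> C \<and> y \<in> nodes T \<and> (\<exists>b. y = x @ [b])"

text \<open>The pieces left after removing s from C: the components of T minus s
  (left subtree, right subtree, part containing the parent) intersected with C.\<close>
definition piece_l :: "bool list set \<Rightarrow> bool list \<Rightarrow> bool list set" where
  "piece_l C s = {v \<in> C. \<exists>w. v = s @ [False] @ w}"

definition piece_r :: "bool list set \<Rightarrow> bool list \<Rightarrow> bool list set" where
  "piece_r C s = {v \<in> C. \<exists>w. v = s @ [True] @ w}"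

definition piece_p :: "bool list set \<Rightarrow> bool list \<Rightarrow> bool list set" where
  "piece_p C s = {v \<in> C. \<not> (\<exists>w. v = s @ w)}"

definition is_centroid :: "bool list set \<Rightarrow> bool list \<Rightarrow> bool" where
  "is_centroid C u \<longleftrightarrow> u \<in> C \<and>
     (\<forall>P \<in> {piece_l C u, piece_r C u, piece_p C u}. real (card P) \<le> real (card C) / 2)"

fun lca :: "bool list \<Rightarrow> bool list \<Rightarrow> bool list" where
  "lca (a # xs) (b # ys) = (if a = b then a # lca xs ys else [])"
| "lca _ _ = []"

datatype 'a tern = TNode 'a "'a tern list"

fun theight :: "'a tern \<Rightarrow> nat" where
  "theight (TNode x ts) = fold max (map (\<lambda>t. Suc (theight t)) ts) 0"

inductive is_mcd :: "bt \<Rightarrow> bool list set \<Rightarrow> bool list tern \<Rightarrow> bool" for T where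
  "\<lbrakk> is_component T C;
     (\<not> (\<exists>x y. edge_from_below T C x y)) \<and> is_centroid C s
     \<or> (\<exists>x y c. edge_from_below T C x y \<and> is_centroid C c \<and> s = lca x c);
     Ps = filter (\<lambda>P. P \<noteq> {}) [piece_l C s, piece_r C s, piece_p C s];
     length ts = length Ps;
     \<forall>i < length Ps. is_mcd T (Ps ! i) (ts ! i) \<rbrakk>
   \<Longrightarrow> is_mcd T C (TNode s ts)"

end

theory Submission
  imports Defs
begin

text \<open>Give every component C of the decomposition the potential
  |C|^2, doubled when C has an edge from below. All edges from below of a
  component of the decomposition leave from a single node x (the root
  component has none); removing the splitting node s preserves this, since x
  lies below s. Each piece either has at most half the nodes of C, which
  divides |C|^2 by 4 and so halves the potential even if the piece gains an edge
  from below, or it has no edge from below while C has one, which also halves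
  the potential. Hence 2 to the height is at most the potential
  |T|^2 \<le> (2n)^2 of the root.\<close>

lemma lca_prefix_left: "\<exists>u. x = lca x y @ u"
  by (induction x y rule: lca.induct) auto

lemma lca_prefix_right: "\<exists>u. y = lca x y @ u"
  by (induction x y rule: lca.induct) auto

lemma lca_append: "lca (p @ xs) (p @ ys) = p @ lca xs ys"
  by (induction p) auto

lemma finite_nodes: "finite (nodes T)"
  by (induction T) auto

lemma finite_component: "is_component T C \<Longrightarrow> finite C"
  using finite_nodes unfolding is_component_def by (meson rev_finite_subset)

lemma card_nodes_leaves: "card (nodes T) + 1 = 2 * leaves T"
proof (induction T)
  case Lf
  then show ?case by simp
next
  case (Nd l r)
  have "[] \<notin> Cons False ` nodes l \<union> Cons True ` nodes r" by auto
  then have "card (nodes (Nd l r)) = Suc (card (Cons False ` nodes l \<union> Cons True ` nodes r))"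
    using finite_nodes by simp
  also have "\<dots> = Suc (card (nodes l) + card (nodes r))"
    using finite_nodes by (subst card_Un_disjoint) (auto simp: card_image)
  finally show ?case using Nd by simp
qed

lemma theight_TNode: "theight (TNode s ts) = Max (insert 0 ((\<lambda>t. Suc (theight t)) ` set ts))"
  using Max.set_eq_fold[of 0 "map (\<lambda>t. Suc (theight t)) ts"] by simp

lemma pow_theight_TNode_le:
  assumes "1 \<le> B" "\<And>t. t \<in> set ts \<Longrightarrow> 2 * 2 ^ theight t \<le> (B::nat)"
  shows "2 ^ theight (TNode s ts) \<le> B"
proof -
  have "theight (TNode s ts) \<in> insert 0 ((\<lambda>t. Suc (theight t)) ` set ts)"
    unfolding theight_TNode by (rule Max_in) auto
  then show ?thesis using assms by auto
qed

definition pieces :: "bool list set \<Rightarrow> bool list \<Rightarrow> bool list set set" where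
  "pieces C s = {piece_l C s, piece_r C s, piece_p C s}"

definition piece_child :: "bool list set \<Rightarrow> bool list \<Rightarrow> bool \<Rightarrow> bool list set" where
  "piece_child C s b = {v \<in> C. \<exists>w. v = s @ b # w}"

lemma piece_l_eq_piece_child: "piece_l C s = piece_child C s False"
  and piece_r_eq_piece_child: "piece_r C s = piece_child C s True"
  unfolding piece_l_def piece_r_def piece_child_def by simp_all

lemma pieces_eq: "pieces C s = {piece_child C s False, piece_child C s True, piece_p C s}"
  by (simp add: pieces_def piece_l_eq_piece_child piece_r_eq_piece_child)

lemma pieces_subset: "P \<in> pieces C s \<Longrightarrow> P \<subseteq> C"
  unfolding pieces_eq piece_child_def piece_p_def by auto

lemma centroid_card_pieces:
  assumes "is_centroid C c" "P \<in> pieces C c"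
  shows "2 * card P \<le> card C"
proof -
  have "real (card P) \<le> real (card C) / 2"
    using assms unfolding is_centroid_def pieces_def by auto
  then show ?thesis by linarith
qed

lemma centroid_card_subset_piece_p:
  assumes "is_centroid C c" "finite C" "P \<subseteq> piece_p C c"
  shows "2 * card P \<le> card C"
proof -
  have "finite (piece_p C c)" using assms(2) by (simp add: piece_p_def)
  then have "card P \<le> card (piece_p C c)" using assms(3) by (rule card_mono)
  moreover have "2 * card (piece_p C c) \<le> card C"
    using assms(1) by (rule centroid_card_pieces) (simp add: pieces_def)
  ultimately show ?thesis by linarith
qed

abbreviation has_edge_from_below :: "bt \<Rightarrow> bool list set \<Rightarrow> bool" where
  "has_edge_from_below T C \<equiv> \<exists>x y. edge_from_below T C x y"

text \<open>The paper's invariant "at most one edge from below", weakened to a common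
  parent endpoint; this is all the argument needs.\<close>

definition unique_exit_node :: "bt \<Rightarrow> bool list set \<Rightarrow> bool" where
  "unique_exit_node T C \<longleftrightarrow>
     (\<forall>x y x' y'. edge_from_below T C x y \<longrightarrow> edge_from_below T C x' y' \<longrightarrow> x = x')"

lemma edge_from_below_piece_child:
  "edge_from_below T (piece_child C s b) x y \<Longrightarrow> edge_from_below T C x y"
  unfolding edge_from_below_def piece_child_def by auto

lemma edge_from_below_piece_p:
  assumes "edge_from_below T (piece_p C s) x y"
  shows "edge_from_below T C x y \<or> y = s"
proof -
  obtain b where x: "x \<in> C" "\<nexists>w. x = s @ w" "y \<notin> piece_p C s" "y \<in> nodes T" "y = x @ [b]"
    using assms unfolding edge_from_below_def piece_p_def by auto
  show ?thesis
  proof (cases "y \<in> C")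
    case True
    then obtain w where w: "s @ w = x @ [b]" using x(3,5) unfolding piece_p_def by auto
    have "w = []"
    proof (cases w rule: rev_exhaust)
      case (snoc w' c)
      then have "(s @ w') @ [c] = x @ [b]" using w by simp
      then have "x = s @ w'" by (simp only: append1_eq_conv)
      with x(2) show ?thesis by blast
    qed
    then show ?thesis using w x(5) by simp
  next
    case False
    then show ?thesis using x(1,4,5) unfolding edge_from_below_def by blast
  qed
qed

lemma unique_exit_node_pieces:
  assumes "unique_exit_node T C" "\<And>x y. edge_from_below T C x y \<Longrightarrow> \<exists>w. x = s @ w"
    and "P \<in> pieces C s"
  shows "unique_exit_node T P"
proof -
  have "unique_exit_node T (piece_child C s b)" for b
    using assms(1) edge_from_below_piece_child unfolding unique_exit_node_def by blast
  moreover have "unique_exit_node T (piece_p C s)"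
    unfolding unique_exit_node_def
  proof (intro allI impI)
    fix x y x' y'
    assume e: "edge_from_below T (piece_p C s) x y" "edge_from_below T (piece_p C s) x' y'"
    then have "\<nexists>w. x = s @ w" "\<nexists>w. x' = s @ w"
      unfolding edge_from_below_def piece_p_def by auto
    then have "y = s" "y' = s"
      using edge_from_below_piece_p[OF e(1)] edge_from_below_piece_p[OF e(2)] assms(2) by blast+
    moreover obtain b b' where "y = x @ [b]" "y' = x' @ [b']"
      using e unfolding edge_from_below_def by auto
    ultimately show "x = x'" by (metis butlast_snoc)
  qed
  ultimately show ?thesis using assms(3) unfolding pieces_eq by auto
qed

text \<open>With s the lca of the exit node x and the centroid c, a child piece of s
  either avoids the subtree of c, and is then contained in the parent piece of c,
  or lies on the side of c, which does not contain x.\<close>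

lemma piece_child_lca_small_or_closed:
  assumes cen: "is_centroid C c" and fin: "finite C"
    and uniq: "unique_exit_node T C" and e: "edge_from_below T C x y" and s: "s = lca x c"
  shows "2 * card (piece_child C s b) \<le> card C
    \<or> \<not> has_edge_from_below T (piece_child C s b)"
proof -
  obtain w where c: "c = s @ w" using lca_prefix_right s by blast
  show ?thesis
  proof (cases w)
    case Nil
    then have "2 * card (piece_child C s b) \<le> card C"
      using centroid_card_pieces[OF cen] c by (cases b) (simp_all add: pieces_eq)
    then show ?thesis ..
  next
    case (Cons a w')
    show ?thesis
    proof (cases "a = b")
      case False
      then have "piece_child C s b \<subseteq> piece_p C c"
        unfolding piece_child_def piece_p_def c Cons by auto
      then show ?thesis using centroid_card_subset_piece_p[OF cen fin] by blast
    next
      case True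
      have "\<not> edge_from_below T (piece_child C s b) x' y'" for x' y'
      proof
        assume e': "edge_from_below T (piece_child C s b) x' y'"
        then have "x' = x"
          using uniq e edge_from_below_piece_child unfolding unique_exit_node_def by blast
        then obtain u where "x = s @ b # u"
          using e' unfolding edge_from_below_def piece_child_def by auto
        then have "lca x c = s @ b # lca u w'"
          using c Cons True lca_append[of s "b # u" "b # w'"] by simp
        then show False by (simp add: s[symmetric])
      qed
      then show ?thesis by blast
    qed
  qed
qed

lemma mcd_piece_progress:
  assumes comp: "is_component T C" and uniq: "unique_exit_node T C"
    and split: "\<not> has_edge_from_below T C \<and> is_centroid C s
      \<or> (\<exists>x y c. edge_from_below T C x y \<and> is_centroid C c \<and> s = lca x c)"
    and P: "P \<in> pieces C s"
  shows "unique_exit_node T P"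
    and "2 * card P \<le> card C \<or> \<not> has_edge_from_below T P \<and> has_edge_from_below T C"
proof -
  have fin: "finite C" using comp by (rule finite_component)
  from split
  have "unique_exit_node T P
    \<and> (2 * card P \<le> card C \<or> \<not> has_edge_from_below T P \<and> has_edge_from_below T C)"
  proof (elim disjE exE conjE)
    assume "\<not> has_edge_from_below T C" "is_centroid C s"
    then show ?thesis
      using unique_exit_node_pieces[OF uniq _ P] centroid_card_pieces[OF _ P] by blast
  next
    fix x y c
    assume e: "edge_from_below T C x y" and cen: "is_centroid C c" and s: "s = lca x c"
    have "\<exists>w. x' = s @ w" if "edge_from_below T C x' y'" for x' y'
      using that uniq e lca_prefix_left s unfolding unique_exit_node_def by metis
    then have "unique_exit_node T P" using unique_exit_node_pieces[OF uniq _ P] by blast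
    moreover obtain u where "c = s @ u" using lca_prefix_right s by blast
    then have "piece_p C s \<subseteq> piece_p C c" unfolding piece_p_def by auto
    ultimately show ?thesis
      using P e centroid_card_subset_piece_p[OF cen fin]
        piece_child_lca_small_or_closed[OF cen fin uniq e s] unfolding pieces_eq by blast
  qed
  then show "unique_exit_node T P"
    and "2 * card P \<le> card C \<or> \<not> has_edge_from_below T P \<and> has_edge_from_below T C"
    by blast+
qed

definition mcd_potential :: "bt \<Rightarrow> bool list set \<Rightarrow> nat" where
  "mcd_potential T C = card C ^ 2 * (if has_edge_from_below T C then 2 else 1)"

lemma mcd_potential_pos: "finite C \<Longrightarrow> C \<noteq> {} \<Longrightarrow> 1 \<le> mcd_potential T C"
  unfolding mcd_potential_def by (simp add: Suc_le_eq card_gt_0_iff)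

lemma mcd_potential_piece:
  assumes "finite C" "P \<subseteq> C"
    and "2 * card P \<le> card C \<or> \<not> has_edge_from_below T P \<and> has_edge_from_below T C"
  shows "2 * mcd_potential T P \<le> mcd_potential T C"
  using assms(3)
proof
  assume half: "2 * card P \<le> card C"
  have "2 * mcd_potential T P \<le> (2 * card P) ^ 2"
    unfolding mcd_potential_def by (simp add: power2_eq_square)
  also have "\<dots> \<le> card C ^ 2" using half by (rule power_mono) simp
  also have "\<dots> \<le> mcd_potential T C" unfolding mcd_potential_def by simp
  finally show ?thesis .
next
  assume "\<not> has_edge_from_below T P \<and> has_edge_from_below T C"
  then have "mcd_potential T P = card P ^ 2" "mcd_potential T C = card C ^ 2 * 2"
    by (auto simp: mcd_potential_def)
  moreover have "card P ^ 2 \<le> card C ^ 2" using assms(1,2) by (simp add: card_mono power_mono)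
  ultimately show ?thesis by simp
qed

lemma mcd_height_potential:
  "is_mcd T C D \<Longrightarrow> unique_exit_node T C \<Longrightarrow> 2 ^ theight D \<le> mcd_potential T C"
proof (induction rule: is_mcd.induct)
  case (1 C s Ps ts)
  have fin: "finite C" using "1.hyps"(1) by (rule finite_component)
  show ?case
  proof (rule pow_theight_TNode_le)
    show "1 \<le> mcd_potential T C"
      using "1.hyps"(1) fin mcd_potential_pos unfolding is_component_def by blast
  next
    fix t assume "t \<in> set ts"
    then obtain i where i: "i < length Ps" "t = ts ! i"
      using "1.hyps"(4) by (auto simp: in_set_conv_nth)
    have "set Ps \<subseteq> pieces C s" unfolding "1.hyps"(3) pieces_def by auto
    then have P: "Ps ! i \<in> pieces C s" using nth_mem[OF i(1)] by blast
    note progress = mcd_piece_progress[OF "1.hyps"(1) "1.prems" "1.hyps"(2) P]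
    have "2 * 2 ^ theight t \<le> 2 * mcd_potential T (Ps ! i)"
      using "1.IH" i progress(1) by simp
    also have "\<dots> \<le> mcd_potential T C"
      using mcd_potential_piece[OF fin pieces_subset[OF P] progress(2)] .
    finally show "2 * 2 ^ theight t \<le> mcd_potential T C" .
  qed
qed

theorem lemma2:
  fixes T :: bt and D :: "bool list tern"
  assumes "is_mcd T (nodes T) D"
  shows "real (theight D) \<le> 2 + 2 * log 2 (real (leaves T))"
proof -
  define n where "n = real (leaves T)"
  have "mcd_potential T (nodes T) = card (nodes T) ^ 2"
    and "unique_exit_node T (nodes T)"
    unfolding mcd_potential_def unique_exit_node_def edge_from_below_def by auto
  then have "2 ^ theight D \<le> card (nodes T) ^ 2"
    using mcd_height_potential[OF assms] by simp
  also have "\<dots> \<le> (2 * leaves T) ^ 2"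
    using card_nodes_leaves[of T] by (intro power_mono) linarith+
  finally have "real (2 ^ theight D) \<le> real ((2 * leaves T) ^ 2)"
    by (simp only: of_nat_le_iff)
  then have "(2::real) ^ theight D \<le> (2 * n) ^ 2" unfolding n_def by simp
  moreover have n_pos: "n > 0" using card_nodes_leaves[of T] unfolding n_def by linarith
  ultimately have "log 2 (2 ^ theight D) \<le> log 2 ((2 * n) ^ 2)"
    by (intro log_le_cancel_iff[THEN iffD2]) auto
  also have "log 2 ((2 * n) ^ 2) = 2 * (1 + log 2 n)"
    using n_pos by (subst log_nat_power) (simp_all add: log_mult)
  finally show ?thesis by (simp add: n_def log_nat_power)
qed

end
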